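(* Let $X$ be a smoothly bounded planar domain and let $f(t,z)=z+a(t)\bar z$ be a holomorphic motion of $X$ (with $t\in\mathbb D$). Then $f$ is trivial if and only if $a\equiv0$ on $\mathbb D$.
   Context: A holomorphic motion of a planar domain $X$ is a map $f:\mathbb D\times X\to\mathbb C$ with $f(0,z)=z$ for all $z\in X$, $f(\cdot,z)$ holomorphic on $\mathbb D$ for every $z\in X$, and $f(t,\cdot)$ injective on $X$ for every $t\in\mathbb D$. With $F(t,z)=(t,f(t,z))$, the graph of $f$ is $F(\mathbb D\times X)$; $f$ is called trivial if its graph equals the graph of a holomorphic motion $g$ of $X$ such that $g$ is holomorphic on $\mathbb D\times X$. *)

theory Defs
  imports "HOL-Analysis.Analysis"
begin

definition smooth_jordan_curve :: "(real \<Rightarrow> complex) \<Rightarrow> bool" where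
  "smooth_jordan_curve \<gamma> \<longleftrightarrow>
     (\<exists>D :: nat \<Rightarrow> real \<Rightarrow> complex. D 0 = \<gamma> \<and>
        (\<forall>n t. (D n has_vector_derivative D (Suc n) t) (at t)) \<and>
        (\<forall>t. D 1 t \<noteq> 0)) \<and>
     (\<forall>t. \<gamma> (t + 1) = \<gamma> t) \<and>
     inj_on \<gamma> {0..<1}"

definition smoothly_bounded_domain :: "complex set \<Rightarrow> bool" where
  "smoothly_bounded_domain X \<longleftrightarrow>
     open X \<and> connected X \<and> X \<noteq> {} \<and> bounded X \<and>
     (\<exists>\<Gamma>. finite \<Gamma> \<and> (\<forall>\<gamma>\<in>\<Gamma>. smooth_jordan_curve \<gamma>) \<and>
        (\<forall>\<gamma>\<in>\<Gamma>. \<forall>\<delta>\<in>\<Gamma>. \<gamma> \<noteq> \<delta> \<longrightarrow> range \<gamma> \<inter> range \<delta> = {}) \<and>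
        frontier X = (\<Union>\<gamma>\<in>\<Gamma>. range \<gamma>))"

definition holomorphic_motion :: "(complex \<Rightarrow> complex \<Rightarrow> complex) \<Rightarrow> complex set \<Rightarrow> bool" where
  "holomorphic_motion f X \<longleftrightarrow>
     (\<forall>z\<in>X. f 0 z = z) \<and>
     (\<forall>z\<in>X. (\<lambda>t. f t z) holomorphic_on ball 0 1) \<and>
     (\<forall>t\<in>ball 0 1. inj_on (f t) X)"

definition motion_graph :: "(complex \<Rightarrow> complex \<Rightarrow> complex) \<Rightarrow> complex set \<Rightarrow> (complex \<times> complex) set" where
  "motion_graph f X = (\<lambda>(t, z). (t, f t z)) ` (ball 0 1 \<times> X)"

definition holomorphic2_on :: "(complex \<Rightarrow> complex \<Rightarrow> complex) \<Rightarrow> (complex \<times> complex) set \<Rightarrow> bool" where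
  "holomorphic2_on g S \<longleftrightarrow>
     (\<forall>p\<in>S. \<exists>A B :: complex.
        ((\<lambda>(t, z). g t z) has_derivative (\<lambda>(h, k). A * h + B * k)) (at p))"

definition trivial_motion :: "(complex \<Rightarrow> complex \<Rightarrow> complex) \<Rightarrow> complex set \<Rightarrow> bool" where
  "trivial_motion f X \<longleftrightarrow>
     (\<exists>g. holomorphic_motion g X \<and> holomorphic2_on g (ball 0 1 \<times> X) \<and>
          motion_graph g X = motion_graph f X)"

end

theory Submission
  imports Defs "HOL-Complex_Analysis.Conformal_Mappings"
begin

text \<open>
  Suppose the graph of \<open>f t z = z + a t * cnj z\<close> is that of a jointly holomorphic motion
  \<open>g\<close>. Then each \<open>g t\<close> maps \<open>X\<close> conformally onto the image of \<open>X\<close> under the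
  real-linear map \<open>f t\<close>, so for small \<open>|t|\<close> the area formula gives
  \<open>\<integral>\<^sub>X |(g t)'|\<^sup>2 = area (f t ` X) = (1 - |a t|\<^sup>2) area X\<close>.
  On the other hand \<open>t \<mapsto> (g t)' w\<close> is holomorphic with value 1 at \<open>t = 0\<close>, so its mean
  over a circle \<open>|t| = r\<close> is 1 and the mean of \<open>|(g t)' w|\<^sup>2\<close> is at least 1.
  Integrating over the circle and over \<open>X\<close> (Fubini) gives
  \<open>area X \<le> (1 - mean |a|\<^sup>2) area X\<close>, so \<open>a\<close> vanishes on small circles and hence,
  being holomorphic, on the whole disc.
\<close>

section \<open>Lebesgue measure on the complex plane as a copy of \<open>\<real>\<^sup>2\<close>\<close>

definition vec_of_complex :: "complex \<Rightarrow> real^2" where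
  "vec_of_complex z = vector [Re z, Im z]"

definition complex_of_vec :: "real^2 \<Rightarrow> complex" where
  "complex_of_vec v = Complex (v$1) (v$2)"

lemma complex_of_vec_of_complex [simp]: "complex_of_vec (vec_of_complex z) = z"
  by (simp add: vec_of_complex_def complex_of_vec_def)

lemma vec_of_complex_of_vec [simp]: "vec_of_complex (complex_of_vec v) = v"
  by (simp add: vec_of_complex_def complex_of_vec_def vec_eq_iff forall_2)

lemma vec_of_complex_eq_iff [simp]: "vec_of_complex z = vec_of_complex w \<longleftrightarrow> z = w"
  by (metis complex_of_vec_of_complex)

lemma complex_of_vec_eq_iff [simp]: "complex_of_vec v = complex_of_vec u \<longleftrightarrow> v = u"
  by (metis vec_of_complex_of_vec)

lemma bounded_linear_vec_of_complex: "bounded_linear vec_of_complex"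
  by (auto simp: linear_iff vec_of_complex_def vec_eq_iff forall_2 intro: linear_conv_bounded_linear[THEN iffD1])

lemma bounded_linear_complex_of_vec: "bounded_linear complex_of_vec"
  by (auto simp: linear_iff complex_of_vec_def complex_eq_iff intro: linear_conv_bounded_linear[THEN iffD1])

lemma complex_of_vec_measurable [measurable]: "complex_of_vec \<in> borel_measurable borel"
  by (intro borel_measurable_continuous_onI linear_continuous_on bounded_linear_complex_of_vec)

lemma image_vec_of_complex: "vec_of_complex ` A = complex_of_vec -` A"
  by (auto simp: image_iff) (metis vec_of_complex_of_vec)

lemma vimage_complex_of_vec_box:
  "complex_of_vec -` box l u = box (vec_of_complex l) (vec_of_complex u)"
proof -
  have "v \<in> complex_of_vec -` box l u \<longleftrightarrow> Re l < v$1 \<and> v$1 < Re u \<and> Im l < v$2 \<and> v$2 < Im u" for v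
    by (simp add: mem_box Basis_complex_def inner_complex_def complex_of_vec_def)
  then show ?thesis
    by (auto simp: mem_box_cart vec_of_complex_def forall_2)
qed

lemma distr_complex_of_vec_lborel: "distr lborel borel complex_of_vec = (lborel :: complex measure)"
proof (rule lborel_eqI[symmetric])
  fix l u :: complex
  assume le: "\<And>b. b \<in> Basis \<Longrightarrow> l \<bullet> b \<le> u \<bullet> b"
  have basis: "(Basis :: (real^2) set) = {axis 1 1, axis 2 1}"
    by (auto simp: Basis_vec_def UNIV_2)
  have "axis (1::2) (1::real) \<noteq> axis 2 1"
    by (simp add: axis_eq_axis)
  moreover have "\<forall>b\<in>Basis. vec_of_complex l \<bullet> b \<le> vec_of_complex u \<bullet> b"
    using le[of 1] le[of \<i>] by (auto simp: basis vec_of_complex_def inner_axis Basis_complex_def)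
  ultimately have "emeasure lborel (box (vec_of_complex l) (vec_of_complex u)) = (\<Prod>b\<in>Basis. (u - l) \<bullet> b)"
    by (simp add: emeasure_lborel_box_eq basis inner_axis vec_of_complex_def Basis_complex_def
        ennreal_mult'[symmetric] prod_nonneg)
  then show "emeasure (distr lborel borel complex_of_vec) (box l u) = (\<Prod>b\<in>Basis. (u - l) \<bullet> b)"
    by (simp add: emeasure_distr vimage_complex_of_vec_box)
qed simp

lemma emeasure_vec_of_complex_image:
  "A \<in> sets borel \<Longrightarrow> emeasure lborel (vec_of_complex ` A) = emeasure lborel A"
  using emeasure_distr[of complex_of_vec lborel borel A]
  by (simp add: distr_complex_of_vec_lborel image_vec_of_complex)

lemma measure_vec_of_complex_image:
  "A \<in> sets borel \<Longrightarrow> measure lborel (vec_of_complex ` A) = measure lborel A"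
  by (simp add: measure_def emeasure_vec_of_complex_image)

lemma measure_lborel_pos:
  fixes X :: "'a::euclidean_space set"
  assumes "open X" and "bounded X" and "X \<noteq> {}"
  shows "0 < measure lborel X"
proof -
  have "X \<in> lmeasurable"
    using assms by (intro bounded_set_imp_lmeasurable) (auto simp: borel_open)
  moreover have "\<not> negligible X"
    using assms by (intro open_not_negligible)
  ultimately have "measure lebesgue X \<noteq> 0"
    by (simp add: negligible_iff_measure0)
  then show ?thesis
    using assms(1) measure_nonneg[of lebesgue X] by (simp add: borel_open less_le)
qed

lemma det_matrix_complex_real_linear:
  "det (matrix (vec_of_complex \<circ> (\<lambda>h. \<alpha> * h + \<beta> * cnj h) \<circ> complex_of_vec))
     = (cmod \<alpha>)\<^sup>2 - (cmod \<beta>)\<^sup>2"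
proof -
  have "complex_of_vec (axis 1 1) = 1" "complex_of_vec (axis 2 1) = \<i>"
    by (simp_all add: complex_of_vec_def axis_def complex_eq_iff)
  then have "det (matrix (vec_of_complex \<circ> (\<lambda>h. \<alpha> * h + \<beta> * cnj h) \<circ> complex_of_vec))
      = (Re \<alpha> + Re \<beta>) * (Re \<alpha> - Re \<beta>) - (Im \<beta> - Im \<alpha>) * (Im \<alpha> + Im \<beta>)"
    by (simp add: det_2 matrix_def vec_of_complex_def)
  also have "\<dots> = ((Re \<alpha>)\<^sup>2 + (Im \<alpha>)\<^sup>2) - ((Re \<beta>)\<^sup>2 + (Im \<beta>)\<^sup>2)"
    by algebra
  finally show ?thesis
    by (simp only: cmod_power2)
qed

lemma has_integral_via_complex_of_vec:
  fixes f :: "complex \<Rightarrow> real"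
  assumes f: "(\<lambda>z. indicator S z *\<^sub>R f z) \<in> borel_measurable borel"
    and nonneg: "\<And>z. z \<in> S \<Longrightarrow> 0 \<le> f z" and "m \<ge> 0"
    and int: "((\<lambda>v. f (complex_of_vec v)) has_integral m) (complex_of_vec -` S)"
  shows "(f has_integral m) S"
proof -
  have "(\<integral>\<^sup>+ z. ennreal (indicator S z *\<^sub>R f z) \<partial>lborel)
      = (\<integral>\<^sup>+ v. ennreal (indicator S (complex_of_vec v) *\<^sub>R f (complex_of_vec v)) \<partial>lborel)"
    using nn_integral_distr[of complex_of_vec lborel borel "\<lambda>z. ennreal (indicator S z *\<^sub>R f z)"] f
    by (simp add: distr_complex_of_vec_lborel)
  also have "\<dots> = (\<integral>\<^sup>+ v. ennreal (f (complex_of_vec v)) * indicator (complex_of_vec -` S) v \<partial>lborel)"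
    by (intro nn_integral_cong) (auto simp: indicator_def)
  also have "\<dots> = ennreal m"
    by (rule nn_integral_has_integral_lebesgue'[OF _ int]) (simp add: nonneg)
  finally have "((\<lambda>z. indicator S z *\<^sub>R f z) has_integral m) UNIV"
    by (intro nn_integral_has_integral[OF f]) (auto simp: nonneg indicator_def \<open>m \<ge> 0\<close>)
  moreover have "(\<lambda>z. indicator S z *\<^sub>R f z) = (\<lambda>z. if z \<in> S then f z else 0)"
    by (auto simp: fun_eq_iff indicator_def)
  ultimately show ?thesis
    using has_integral_restrict_UNIV[of S f] by simp
qed

lemma has_derivative_vec_of_complex_conj:
  assumes "(\<phi> has_derivative \<phi>') (at (complex_of_vec v))"
  shows "((vec_of_complex \<circ> \<phi> \<circ> complex_of_vec) has_derivative (vec_of_complex \<circ> \<phi>' \<circ> complex_of_vec)) (at v)"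
  using has_derivative_compose[OF has_derivative_compose[OF
        bounded_linear_imp_has_derivative[OF bounded_linear_complex_of_vec] assms]
        bounded_linear_imp_has_derivative[OF bounded_linear_vec_of_complex]]
  by (simp add: o_def)

lemma inj_on_vec_of_complex_conj:
  assumes "inj_on \<phi> S"
  shows "inj_on (vec_of_complex \<circ> \<phi> \<circ> complex_of_vec) (complex_of_vec -` S)"
proof (rule inj_onI)
  fix v u
  assume "v \<in> complex_of_vec -` S" "u \<in> complex_of_vec -` S"
    and "(vec_of_complex \<circ> \<phi> \<circ> complex_of_vec) v = (vec_of_complex \<circ> \<phi> \<circ> complex_of_vec) u"
  then show "v = u"
    using inj_onD[OF assms, of "complex_of_vec v" "complex_of_vec u"] by simp
qed

theorem has_integral_measure_image_complex:
  fixes \<phi> \<alpha> \<beta> :: "complex \<Rightarrow> complex"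
  assumes S: "open S" and inj: "inj_on \<phi> S"
    and der: "\<And>x. x \<in> S \<Longrightarrow> (\<phi> has_derivative (\<lambda>h. \<alpha> x * h + \<beta> x * cnj h)) (at x)"
    and cont: "continuous_on S (\<lambda>x. \<bar>(cmod (\<alpha> x))\<^sup>2 - (cmod (\<beta> x))\<^sup>2\<bar>)"
    and bounded: "bounded (\<phi> ` S)" and borel: "\<phi> ` S \<in> sets borel"
  shows "((\<lambda>x. \<bar>(cmod (\<alpha> x))\<^sup>2 - (cmod (\<beta> x))\<^sup>2\<bar>) has_integral measure lborel (\<phi> ` S)) S"
proof (rule has_integral_via_complex_of_vec)
  define \<Phi> where "\<Phi> = vec_of_complex \<circ> \<phi> \<circ> complex_of_vec"
  define S' where "S' = complex_of_vec -` S"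
  have "open S'"
    unfolding S'_def
    by (intro continuous_open_vimage S linear_continuous_at bounded_linear_complex_of_vec)
  then have S': "S' \<in> sets lebesgue"
    by (simp add: borel_open)
  have deriv: "(\<Phi> has_derivative
      (vec_of_complex \<circ> (\<lambda>h. \<alpha> (complex_of_vec v) * h + \<beta> (complex_of_vec v) * cnj h) \<circ> complex_of_vec))
      (at v within S')" if "v \<in> S'" for v
  proof -
    have "complex_of_vec v \<in> S"
      using that by (simp add: S'_def)
    then show ?thesis
      unfolding \<Phi>_def by (rule has_derivative_at_withinI[OF has_derivative_vec_of_complex_conj[OF der]])
  qed
  have inj: "inj_on \<Phi> S'"
    unfolding \<Phi>_def S'_def using inj by (rule inj_on_vec_of_complex_conj)
  have image: "\<Phi> ` S' = vec_of_complex ` (\<phi> ` S)"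
    by (simp add: \<Phi>_def S'_def image_comp image_vec_of_complex[symmetric])
  have image_borel: "\<Phi> ` S' \<in> sets borel"
    using borel by (simp add: image image_vec_of_complex measurable_sets_borel[OF complex_of_vec_measurable])
  have "\<Phi> ` S' \<in> lmeasurable"
    using bounded_linear_image[OF bounded bounded_linear_vec_of_complex] image_borel
    by (intro bounded_set_imp_lmeasurable) (auto simp: image)
  then have "((\<lambda>v. \<bar>det (matrix (vec_of_complex \<circ> (\<lambda>h. \<alpha> (complex_of_vec v) * h + \<beta> (complex_of_vec v) * cnj h) \<circ> complex_of_vec))\<bar>)
      has_integral measure lebesgue (\<Phi> ` S')) S'"
    using has_measure_differentiable_image[OF S' deriv inj] by blast
  then show "((\<lambda>v. \<bar>(cmod (\<alpha> (complex_of_vec v)))\<^sup>2 - (cmod (\<beta> (complex_of_vec v)))\<^sup>2\<bar>)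
      has_integral measure lborel (\<phi> ` S)) (complex_of_vec -` S)"
    using image_borel measure_vec_of_complex_image[OF borel]
    unfolding image S'_def[symmetric] by (simp add: det_matrix_complex_real_linear)
  show "(\<lambda>z. indicator S z *\<^sub>R \<bar>(cmod (\<alpha> z))\<^sup>2 - (cmod (\<beta> z))\<^sup>2\<bar>) \<in> borel_measurable borel"
    using cont S by (intro borel_measurable_continuous_on_indicator) auto
qed auto

section \<open>The real-linear maps \<open>z \<mapsto> z + a * cnj z\<close>\<close>

lemma bounded_linear_add_mult_cnj: "bounded_linear (\<lambda>z. z + a * cnj z)"
proof -
  have "linear (\<lambda>z. z + a * cnj z)"
    by (auto simp: linear_iff algebra_simps scaleR_conv_of_real)
  then show ?thesis
    by (simp add: linear_conv_bounded_linear)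
qed

lemma inj_add_mult_cnj:
  assumes "cmod a < 1"
  shows "inj (\<lambda>z. z + a * cnj z)"
proof (rule injI)
  fix z w assume "z + a * cnj z = w + a * cnj w"
  then have "z - w = - a * cnj (z - w)"
    by (simp add: algebra_simps)
  then have "cmod (z - w) = cmod a * cmod (z - w)"
    by (metis complex_mod_cnj norm_minus_cancel norm_mult)
  then show "z = w"
    using assms by (cases "z = w") auto
qed

lemma open_add_mult_cnj_image:
  assumes "cmod a < 1" and "open X"
  shows "open ((\<lambda>z. z + a * cnj z) ` X)"
  using assms bounded_linear_add_mult_cnj[of a] inj_add_mult_cnj[of a]
  by (intro open_surjective_linear_image linear_inj_imp_surj) (auto dest: bounded_linear.linear)

lemma measure_add_mult_cnj_image:
  assumes "cmod a < 1" and "open X" and "bounded X"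
  shows "measure lborel ((\<lambda>z. z + a * cnj z) ` X) = (1 - (cmod a)\<^sup>2) * measure lborel X"
proof -
  have "(cmod a)\<^sup>2 \<le> 1"
    using assms(1) by (simp add: power_le_one)
  moreover have "((\<lambda>_. \<bar>(cmod 1)\<^sup>2 - (cmod a)\<^sup>2\<bar>) has_integral measure lborel ((\<lambda>z. z + a * cnj z) ` X)) X"
    using assms bounded_linear_add_mult_cnj[of a] inj_add_mult_cnj[of a]
    by (intro has_integral_measure_image_complex)
       (auto simp: bounded_linear_imp_has_derivative bounded_linear_image
          open_add_mult_cnj_image borel_open intro: inj_on_subset)
  ultimately have "((\<lambda>_. 1 - (cmod a)\<^sup>2) has_integral measure lborel ((\<lambda>z. z + a * cnj z) ` X)) X"
    by simp
  moreover have "((\<lambda>_. 1 - (cmod a)\<^sup>2) has_integral (1 - (cmod a)\<^sup>2) * measure lborel X) X"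
    using has_integral_mult_right[OF has_integral_measure_lborel[OF
          borel_open[OF assms(2)] emeasure_bounded_finite[OF assms(3)]]]
    by simp
  ultimately show ?thesis
    by (rule has_integral_unique)
qed

lemma has_integral_norm_deriv_power2:
  assumes "f holomorphic_on S" and "open S" and "inj_on f S" and "bounded (f ` S)"
  shows "((\<lambda>z. (cmod (deriv f z))\<^sup>2) has_integral measure lborel (f ` S)) S"
proof -
  have "((\<lambda>z. \<bar>(cmod (deriv f z))\<^sup>2 - (cmod 0)\<^sup>2\<bar>) has_integral measure lborel (f ` S)) S"
  proof (rule has_integral_measure_image_complex)
    show "(f has_derivative (\<lambda>h. deriv f z * h + 0 * cnj h)) (at z)" if "z \<in> S" for z
      using holomorphic_derivI[OF assms(1,2) that] by (simp add: has_field_derivative_def)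
    show "continuous_on S (\<lambda>z. \<bar>(cmod (deriv f z))\<^sup>2 - (cmod 0)\<^sup>2\<bar>)"
      using assms by (auto intro!: continuous_intros holomorphic_on_imp_continuous_on holomorphic_deriv)
    show "f ` S \<in> sets borel"
      using assms by (simp add: borel_open open_mapping_thm3)
  qed (use assms in auto)
  then show ?thesis
    by simp
qed

section \<open>Circle means\<close>

lemma has_integral_circlepath_contour_integral:
  assumes "(f has_contour_integral i) (circlepath z r)"
  shows "((\<lambda>s. f (circlepath z r s) * vector_derivative (circlepath z r) (at s)) has_integral i) {0..1}"
  using assms unfolding has_contour_integral_def
  by (rule has_integral_eq[rotated])
     (simp add: vector_derivative_circlepath01 vector_derivative_circlepath)

lemma dist_circlepath: "0 \<le> r \<Longrightarrow> dist z (circlepath z r s) = r"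
  by (simp add: circlepath dist_norm norm_mult norm_exp_eq_Re)

lemma continuous_on_circlepath: "continuous_on A (circlepath z r)"
  by (simp add: circlepath continuous_intros)

lemma circlepath_mean_value:
  assumes "0 < r" and "continuous_on (cball z r) f" and "f holomorphic_on ball z r"
  shows "((\<lambda>s. f (circlepath z r s)) has_integral f z) {0..1}"
proof -
  define c :: complex where "c = 2 * of_real pi * \<i>"
  have "((\<lambda>s. f (circlepath z r s) / (circlepath z r s - z) * vector_derivative (circlepath z r) (at s))
      has_integral c * f z) {0..1}"
    using has_integral_circlepath_contour_integral[OF Cauchy_integral_circlepath[OF assms(2,3)]] assms(1)
    by (simp add: c_def)
  moreover have "f (circlepath z r s) / (circlepath z r s - z) * vector_derivative (circlepath z r) (at s)
      = c * f (circlepath z r s)" for s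
    using assms(1) unfolding vector_derivative_circlepath by (simp add: c_def circlepath field_simps)
  ultimately have "((\<lambda>s. c * f (circlepath z r s)) has_integral c * f z) {0..1}"
    by simp
  then have "((\<lambda>s. inverse c * (c * f (circlepath z r s))) has_integral inverse c * (c * f z)) {0..1}"
    by (rule has_integral_mult_right)
  moreover have "c \<noteq> 0"
    by (simp add: c_def)
  ultimately show ?thesis
    by (simp add: mult.assoc[symmetric])
qed

lemma norm_power2_le_integral_norm_power2:
  fixes \<phi> :: "real \<Rightarrow> complex"
  assumes cont: "continuous_on {0..1} \<phi>" and int: "(\<phi> has_integral c) {0..1}"
  shows "(cmod c)\<^sup>2 \<le> integral {0..1} (\<lambda>s. (cmod (\<phi> s))\<^sup>2)"
proof -
  define I where "I = integral {0..1} (\<lambda>s. (cmod (\<phi> s))\<^sup>2)"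
  have I: "((\<lambda>s. (cmod (\<phi> s))\<^sup>2) has_integral I) {0..1}"
    unfolding I_def using cont
    by (intro integrable_integral integrable_continuous_interval continuous_intros)
  have "Re (cnj c * c) = (cmod c)\<^sup>2"
    by (simp only: cmod_power2) (simp add: power2_eq_square)
  then have Re: "((\<lambda>s. Re (cnj c * \<phi> s)) has_integral (cmod c)\<^sup>2) {0..1}"
    using has_integral_linear[OF has_integral_mult_right[OF int, of "cnj c"] bounded_linear_Re]
    by (simp add: o_def)
  have const: "((\<lambda>s::real. (cmod c)\<^sup>2) has_integral (cmod c)\<^sup>2) {0..1}"
    using has_integral_const_real[of "(cmod c)\<^sup>2" 0 1] by simp
  have "((\<lambda>s. (cmod (\<phi> s))\<^sup>2 - 2 * Re (cnj c * \<phi> s) + (cmod c)\<^sup>2) has_integral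
      I - 2 * (cmod c)\<^sup>2 + (cmod c)\<^sup>2) {0..1}"
    by (rule has_integral_add[OF has_integral_diff[OF I has_integral_mult_right[OF Re]] const])
  moreover have "(\<lambda>s. (cmod (\<phi> s))\<^sup>2 - 2 * Re (cnj c * \<phi> s) + (cmod c)\<^sup>2) = (\<lambda>s. (cmod (\<phi> s - c))\<^sup>2)"
    unfolding cmod_power2 by (simp add: fun_eq_iff power2_eq_square algebra_simps)
  ultimately have "((\<lambda>s. (cmod (\<phi> s - c))\<^sup>2) has_integral I - (cmod c)\<^sup>2) {0..1}"
    by simp
  then have "0 \<le> I - (cmod c)\<^sup>2"
    by (rule has_integral_nonneg) simp
  then show ?thesis
    by (simp add: I_def)
qed

lemma continuous_nonneg_integral_le_0_imp_0:
  fixes f :: "real \<Rightarrow> real"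
  assumes cont: "continuous_on {0..1} f" and nonneg: "\<And>s. s \<in> {0..1} \<Longrightarrow> 0 \<le> f s"
    and le: "integral {0..1} f \<le> 0" and s: "s \<in> {0..1}"
  shows "f s = 0"
proof -
  have int: "(f has_integral integral {0..1} f) {0..1}"
    using cont by (intro integrable_integral integrable_continuous_interval)
  have "0 \<le> integral {0..1} f"
    using has_integral_nonneg[OF int nonneg] .
  then have "(f has_integral 0) (cbox 0 1)"
    using int le by simp
  then show ?thesis
    using has_integral_0_cbox_imp_0[of 0 1 f s] cont nonneg s by simp
qed

section \<open>Bounding an area by fibrewise means\<close>

lemma nn_integral_swap_continuous_on_Times:
  fixes F :: "'a::euclidean_space \<Rightarrow> 'b::euclidean_space \<Rightarrow> real"
  assumes "S \<in> sets borel" and "T \<in> sets borel" and "continuous_on (S \<times> T) (\<lambda>p. F (fst p) (snd p))"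
  shows "(\<integral>\<^sup>+ y. (\<integral>\<^sup>+ x. ennreal (indicator (S \<times> T) (x, y) * F x y) \<partial>lborel) \<partial>lborel)
       = (\<integral>\<^sup>+ x. (\<integral>\<^sup>+ y. ennreal (indicator (S \<times> T) (x, y) * F x y) \<partial>lborel) \<partial>lborel)"
proof (rule lborel_pair.Fubini')
  have "S \<times> T \<in> sets (borel \<Otimes>\<^sub>M borel)"
    using assms(1,2) by (intro pair_measureI) auto
  then have "(\<lambda>p. indicator (S \<times> T) p *\<^sub>R F (fst p) (snd p)) \<in> borel_measurable borel"
    unfolding borel_prod by (intro borel_measurable_continuous_on_indicator assms(3))
  then show "(\<lambda>(x, y). ennreal (indicator (S \<times> T) (x, y) * F x y)) \<in> borel_measurable (lborel \<Otimes>\<^sub>M lborel)"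
    by (simp add: lborel_prod case_prod_unfold)
qed

lemma measure_le_integral_of_fibre_integrals:
  fixes F :: "real \<Rightarrow> complex \<Rightarrow> real"
  assumes X: "X \<in> sets borel"
    and cont: "continuous_on ({0..1} \<times> X) (\<lambda>p. F (fst p) (snd p))"
    and nonneg: "\<And>s w. s \<in> {0..1} \<Longrightarrow> w \<in> X \<Longrightarrow> 0 \<le> F s w"
    and fibre: "\<And>s. s \<in> {0..1} \<Longrightarrow> (F s has_integral I s) X"
    and I: "(I has_integral J) {0..1}"
    and mean: "\<And>w. w \<in> X \<Longrightarrow> 1 \<le> integral {0..1} (\<lambda>s. F s w)"
  shows "measure lborel X \<le> J"
proof -
  define H where "H s w = ennreal (indicator ({0..1} \<times> X) (s, w) * F s w)" for s w
  have I_nonneg: "0 \<le> I s" if "s \<in> {0..1}" for s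
    using has_integral_nonneg[OF fibre[OF that]] nonneg that by blast
  have "indicator X w \<le> (\<integral>\<^sup>+ s. H s w \<partial>lborel)" for w
  proof (cases "w \<in> X")
    case True
    have "continuous_on {0..1} (\<lambda>s. (\<lambda>p. F (fst p) (snd p)) (s, w))"
      by (rule continuous_on_compose2[OF cont]) (use True in \<open>auto intro!: continuous_intros\<close>)
    then have "((\<lambda>s. F s w) has_integral integral {0..1} (\<lambda>s. F s w)) {0..1}"
      by (intro integrable_integral integrable_continuous_interval) simp
    then have "(\<integral>\<^sup>+ s. ennreal (indicator {0..1} s * F s w) \<partial>lborel) = integral {0..1} (\<lambda>s. F s w)"
      using True nonneg by (intro nn_integral_has_integral_lebesgue) auto
    moreover have "H s w = ennreal (indicator {0..1} s * F s w)" for s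
      using True by (simp add: H_def indicator_def)
    ultimately show ?thesis
      using True mean by simp
  qed (simp add: H_def)
  then have "(\<integral>\<^sup>+ w. indicator X w \<partial>lborel) \<le> (\<integral>\<^sup>+ w. (\<integral>\<^sup>+ s. H s w \<partial>lborel) \<partial>lborel)"
    by (intro nn_integral_mono)
  then have "emeasure lborel X \<le> (\<integral>\<^sup>+ w. (\<integral>\<^sup>+ s. H s w \<partial>lborel) \<partial>lborel)"
    using X by simp
  also have "\<dots> = (\<integral>\<^sup>+ s. ennreal (indicator {0..1} s * I s) \<partial>lborel)"
    unfolding H_def nn_integral_swap_continuous_on_Times[OF _ X cont, simplified]
  proof (intro nn_integral_cong)
    fix s
    show "(\<integral>\<^sup>+ w. ennreal (indicator ({0..1} \<times> X) (s, w) * F s w) \<partial>lborel)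
        = ennreal (indicator {0..1} s * I s)"
    proof (cases "s \<in> {0..1}")
      case True
      then have "(\<integral>\<^sup>+ w. ennreal (indicator X w * F s w) \<partial>lborel) = ennreal (I s)"
        using nonneg fibre by (intro nn_integral_has_integral_lebesgue) auto
      with True show ?thesis
        by (simp add: indicator_def)
    next
      case False
      then have "indicator ({0..1} \<times> X) (s, w) = (0::real)" for w
        by (auto simp: indicator_def)
      with False show ?thesis
        by simp
    qed
  qed
  also have "\<dots> = ennreal J"
    by (rule nn_integral_has_integral_lebesgue[OF I_nonneg I])
  finally show ?thesis
    using has_integral_nonneg[OF I I_nonneg] by (simp add: measure_def enn2real_leI)
qed

section \<open>Jointly holomorphic families of maps\<close>

locale holomorphic_family =
  fixes g :: "complex \<Rightarrow> complex \<Rightarrow> complex" and X :: "complex set"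
  assumes open_X: "open X" and holomorphic2: "holomorphic2_on g (ball 0 1 \<times> X)"
begin

lemma partial_derivatives:
  assumes "t \<in> ball 0 1" and "w \<in> X"
  obtains A B where "((\<lambda>s. g s w) has_field_derivative A) (at t)"
    and "(g t has_field_derivative B) (at w)"
    and "isCont (\<lambda>p. g (fst p) (snd p)) (t, w)"
proof -
  obtain A B where d: "((\<lambda>(t, z). g t z) has_derivative (\<lambda>(h, k). A * h + B * k)) (at (t, w))"
    using holomorphic2 assms unfolding holomorphic2_on_def by blast
  have "((\<lambda>s. (\<lambda>(t, z). g t z) (s, w)) has_derivative (\<lambda>h. (\<lambda>(h, k). A * h + B * k) (h, 0))) (at t)"
    by (rule has_derivative_compose[OF has_derivative_Pair[OF has_derivative_ident has_derivative_const]])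
       (use d in simp)
  moreover have "((\<lambda>z. (\<lambda>(t, z). g t z) (t, z)) has_derivative (\<lambda>k. (\<lambda>(h, k). A * h + B * k) (0, k))) (at w)"
    by (rule has_derivative_compose[OF has_derivative_Pair[OF has_derivative_const has_derivative_ident]])
       (use d in simp)
  moreover have "isCont (\<lambda>(t, z). g t z) (t, w)"
    using d by (rule has_derivative_continuous)
  ultimately show ?thesis
    by (intro that[of A B]) (simp_all add: has_field_derivative_def case_prod_unfold)
qed

lemma holomorphic_on_fibre: "t \<in> ball 0 1 \<Longrightarrow> g t holomorphic_on X"
  unfolding holomorphic_on_def field_differentiable_def
  by (metis partial_derivatives has_field_derivative_at_within)

lemma holomorphic_on_parameter: "w \<in> X \<Longrightarrow> (\<lambda>t. g t w) holomorphic_on ball 0 1"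
  unfolding holomorphic_on_def field_differentiable_def
  by (metis partial_derivatives has_field_derivative_at_within)

lemma continuous_on_uncurried: "continuous_on (ball 0 1 \<times> X) (\<lambda>p. g (fst p) (snd p))"
proof (intro continuous_at_imp_continuous_on ballI)
  fix p :: "complex \<times> complex" assume "p \<in> ball 0 1 \<times> X"
  then show "isCont (\<lambda>p. g (fst p) (snd p)) p"
    by (metis mem_Times_iff partial_derivatives prod.collapse)
qed

definition deriv_Cauchy_integrand :: "complex \<Rightarrow> real \<Rightarrow> complex \<Rightarrow> complex \<Rightarrow> real \<Rightarrow> complex" where
  "deriv_Cauchy_integrand w0 \<rho> t z u =
     g t (circlepath w0 \<rho> u) / (circlepath w0 \<rho> u - z)\<^sup>2 * vector_derivative (circlepath w0 \<rho>) (at u)"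

lemma continuous_on_deriv_Cauchy_integrand:
  assumes "0 < \<rho>" and "cball w0 \<rho> \<subseteq> X"
  shows "continuous_on ((ball 0 1 \<times> ball w0 \<rho>) \<times> UNIV) (\<lambda>((t, z), u). deriv_Cauchy_integrand w0 \<rho> t z u)"
proof -
  note dist_circ = dist_circlepath[OF less_imp_le[OF assms(1)]]
  have on_circle: "circlepath w0 \<rho> u \<in> X" for u
    using assms dist_circ[of w0 u] by auto
  have "continuous_on ((ball 0 1 \<times> ball w0 \<rho>) \<times> UNIV)
      (\<lambda>q. (\<lambda>p. g (fst p) (snd p)) (fst (fst q), circlepath w0 \<rho> (snd q)))"
    by (rule continuous_on_compose2[OF continuous_on_uncurried])
       (use on_circle in \<open>auto intro!: continuous_intros continuous_on_compose2[OF continuous_on_circlepath]\<close>)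
  moreover have "circlepath w0 \<rho> (snd q) - snd (fst q) \<noteq> 0" if "q \<in> (ball 0 1 \<times> ball w0 \<rho>) \<times> UNIV" for q
    using that dist_circ[of w0 "snd q"] by auto
  ultimately show ?thesis
    unfolding deriv_Cauchy_integrand_def case_prod_unfold vector_derivative_circlepath
    by (auto simp: dist_circ intro!: continuous_intros continuous_on_compose2[OF continuous_on_circlepath])
qed

lemma has_integral_deriv_Cauchy_integrand:
  assumes "t \<in> ball 0 1" and "0 < \<rho>" and "cball w0 \<rho> \<subseteq> X" and "z \<in> ball w0 \<rho>"
  shows "(deriv_Cauchy_integrand w0 \<rho> t z has_integral 2 * of_real pi * \<i> * deriv (g t) z) {0..1}"
proof -
  have hol: "g t holomorphic_on cball w0 \<rho>"
    using holomorphic_on_subset[OF holomorphic_on_fibre[OF assms(1)] assms(3)] .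
  have "((\<lambda>u. g t u / (u - z) ^ Suc 1) has_contour_integral
      of_real (2 * pi) * \<i> / fact 1 * (deriv ^^ 1) (g t) z) (circlepath w0 \<rho>)"
    using assms(4) holomorphic_on_subset[OF hol ball_subset_cball]
    by (intro Cauchy_has_contour_integral_higher_derivative_circlepath holomorphic_on_imp_continuous_on hol)
  from has_integral_circlepath_contour_integral[OF this] show ?thesis
    by (simp add: numeral_2_eq_2 deriv_Cauchy_integrand_def[abs_def])
qed

lemma continuous_on_deriv_uncurried:
  "continuous_on (ball 0 1 \<times> X) (\<lambda>p. deriv (g (fst p)) (snd p))"
proof (intro continuous_at_imp_continuous_on ballI)
  fix p :: "complex \<times> complex" assume p: "p \<in> ball 0 1 \<times> X"
  then obtain \<rho> where \<rho>: "0 < \<rho>" "cball (snd p) \<rho> \<subseteq> X"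
    using open_X open_contains_cball by force
  define U where "U = ball (0::complex) 1 \<times> ball (snd p) \<rho>"
  have "continuous_on (U \<times> cbox 0 1) (\<lambda>((t, z), u). deriv_Cauchy_integrand (snd p) \<rho> t z u)"
    by (rule continuous_on_subset[OF continuous_on_deriv_Cauchy_integrand[OF \<rho>]]) (auto simp: U_def)
  then have "continuous_on U (\<lambda>q. inverse (2 * of_real pi * \<i>)
      * integral (cbox 0 1) (deriv_Cauchy_integrand (snd p) \<rho> (fst q) (snd q)))"
    by (intro continuous_intros integral_continuous_on_param) (simp add: case_prod_unfold)
  moreover have "inverse (2 * of_real pi * \<i>) * integral (cbox 0 1) (deriv_Cauchy_integrand (snd p) \<rho> (fst q) (snd q))
      = deriv (g (fst q)) (snd q)" if "q \<in> U" for q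
  proof -
    have "integral (cbox 0 1) (deriv_Cauchy_integrand (snd p) \<rho> (fst q) (snd q))
        = 2 * of_real pi * \<i> * deriv (g (fst q)) (snd q)"
      using has_integral_deriv_Cauchy_integrand[OF _ \<rho>, of "fst q" "snd q"] that
      unfolding cbox_interval by (intro integral_unique) (auto simp: U_def mem_Times_iff)
    then show ?thesis
      by (simp add: field_simps)
  qed
  ultimately have "continuous_on U (\<lambda>q. deriv (g (fst q)) (snd q))"
    by (rule continuous_on_eq)
  moreover have "open U" "p \<in> U"
    using p \<rho> by (auto simp: U_def open_Times)
  ultimately show "isCont (\<lambda>p. deriv (g (fst p)) (snd p)) p"
    using continuous_on_eq_continuous_at by blast
qed

lemma continuous_on_deriv_circlepath:
  assumes "0 \<le> r" and "r < 1"
  shows "continuous_on (UNIV \<times> X) (\<lambda>p. deriv (g (circlepath 0 r (fst p))) (snd p))"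
proof -
  have "circlepath 0 r s \<in> ball 0 1" for s
    using assms dist_circlepath[OF assms(1), of 0 s] by simp
  then show ?thesis
    by (intro continuous_on_compose2[OF continuous_on_deriv_uncurried,
          of _ "\<lambda>p. (circlepath 0 r (fst p), snd p)", simplified]
        continuous_intros continuous_on_compose2[OF continuous_on_circlepath]) auto
qed

text \<open>By Fubini the mean over \<open>|t| = r\<close> can be moved inside the Cauchy integral, where the
  mean value property of \<open>t \<mapsto> g t \<zeta>\<close> applies.\<close>

lemma integral_deriv_Cauchy_integrand_circlepath_mean:
  assumes \<rho>: "0 < \<rho>" "cball w \<rho> \<subseteq> X" and r: "0 < r" "r < 1"
  shows "integral {0..1} (\<lambda>s. integral {0..1} (deriv_Cauchy_integrand w \<rho> (circlepath 0 r s) w))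
    = integral {0..1} (deriv_Cauchy_integrand w \<rho> 0 w)"
proof -
  define c where "c = circlepath w \<rho>"
  define \<gamma> where "\<gamma> = circlepath (0::complex) r"
  have \<gamma>: "\<gamma> s \<in> ball 0 1" for s
    using r dist_circlepath[of r 0 s] by (simp add: \<gamma>_def)
  have "continuous_on (cbox (0, 0) (1, 1))
      (\<lambda>q. (\<lambda>((t, z), u). deriv_Cauchy_integrand w \<rho> t z u) ((\<gamma> (fst q), w), snd q))"
    using \<rho> \<gamma> unfolding \<gamma>_def
    by (intro continuous_on_compose2[OF continuous_on_deriv_Cauchy_integrand[OF \<rho>]] continuous_intros
        continuous_on_compose2[OF continuous_on_circlepath]) auto
  then have "integral {0..1} (\<lambda>s. integral {0..1} (deriv_Cauchy_integrand w \<rho> (\<gamma> s) w))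
      = integral {0..1} (\<lambda>u. integral {0..1} (\<lambda>s. deriv_Cauchy_integrand w \<rho> (\<gamma> s) w u))"
    using integral_swap_continuous[of 0 0 1 1 "\<lambda>s. deriv_Cauchy_integrand w \<rho> (\<gamma> s) w"]
    by (simp add: case_prod_unfold)
  also have "\<dots> = integral {0..1} (deriv_Cauchy_integrand w \<rho> 0 w)"
  proof (intro integral_cong integral_unique)
    fix u
    have "c u \<in> X"
      using \<rho> dist_circlepath[of \<rho> w u] by (auto simp: c_def)
    then have "(\<lambda>t. g t (c u)) holomorphic_on ball 0 1"
      by (rule holomorphic_on_parameter)
    moreover have "cball 0 r \<subseteq> ball (0::complex) 1"
      using r by auto
    ultimately have mean: "((\<lambda>s. g (\<gamma> s) (c u)) has_integral g 0 (c u)) {0..1}"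
      unfolding \<gamma>_def using r
      by (intro circlepath_mean_value) (auto intro: holomorphic_on_subset holomorphic_on_imp_continuous_on)
    show "((\<lambda>s. deriv_Cauchy_integrand w \<rho> (\<gamma> s) w u) has_integral deriv_Cauchy_integrand w \<rho> 0 w u) {0..1}"
      using has_integral_mult_left[OF mean, of "vector_derivative c (at u) / (c u - w)\<^sup>2"]
      unfolding deriv_Cauchy_integrand_def c_def[symmetric] by simp
  qed
  finally show ?thesis
    by (simp add: \<gamma>_def)
qed

lemma has_integral_deriv_circlepath_mean:
  assumes w: "w \<in> X" and r: "0 < r" "r < 1"
  shows "((\<lambda>s. deriv (g (circlepath 0 r s)) w) has_integral deriv (g 0) w) {0..1}"
proof -
  obtain \<rho> where \<rho>: "0 < \<rho>" "cball w \<rho> \<subseteq> X"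
    using open_X w open_contains_cball by blast
  define C :: complex where "C = 2 * of_real pi * \<i>"
  have Cauchy: "integral {0..1} (deriv_Cauchy_integrand w \<rho> t w) = C * deriv (g t) w"
    if "t \<in> ball 0 1" for t
    using has_integral_deriv_Cauchy_integrand[OF that \<rho>, of w] \<rho>(1) by (simp add: C_def integral_unique)
  have "circlepath 0 r s \<in> ball 0 1" for s
    using r dist_circlepath[of r 0 s] by simp
  then have "integral {0..1} (\<lambda>s. C * deriv (g (circlepath 0 r s)) w) = C * deriv (g 0) w"
    using integral_deriv_Cauchy_integrand_circlepath_mean[OF \<rho> r] by (simp add: Cauchy)
  then have "integral {0..1} (\<lambda>s. deriv (g (circlepath 0 r s)) w) = deriv (g 0) w"
    by (simp add: C_def)
  moreover have "continuous_on {0..1} (\<lambda>s. (\<lambda>p. deriv (g (circlepath 0 r (fst p))) (snd p)) (s, w))"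
    by (rule continuous_on_compose2[OF continuous_on_deriv_circlepath]) (use r w in \<open>auto intro!: continuous_intros\<close>)
  then have "(\<lambda>s. deriv (g (circlepath 0 r s)) w) integrable_on {0..1}"
    by (intro integrable_continuous_interval) simp
  ultimately show ?thesis
    by (metis integrable_integral)
qed

lemma measure_le_circle_mean:
  assumes id: "\<And>z. z \<in> X \<Longrightarrow> g 0 z = z" and r: "0 < r" "r < 1"
    and fibre: "\<And>s. s \<in> {0..1} \<Longrightarrow>
      ((\<lambda>w. (cmod (deriv (g (circlepath 0 r s)) w))\<^sup>2) has_integral A s) X"
    and A: "(A has_integral J) {0..1}"
  shows "measure lborel X \<le> J"
proof (rule measure_le_integral_of_fibre_integrals[OF _ _ _ fibre A])
  show "X \<in> sets borel"
    using open_X by (simp add: borel_open)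
  show "continuous_on ({0..1} \<times> X) (\<lambda>p. (cmod (deriv (g (circlepath 0 r (fst p))) (snd p)))\<^sup>2)"
    using continuous_on_deriv_circlepath[of r] r
    by (auto intro!: continuous_intros elim: continuous_on_subset)
  show "1 \<le> integral {0..1} (\<lambda>s. (cmod (deriv (g (circlepath 0 r s)) w))\<^sup>2)" if "w \<in> X" for w
  proof -
    have "deriv (g 0) w = 1"
      using has_field_derivative_transform_within_open[OF DERIV_ident open_X that] id
      by (metis DERIV_imp_deriv)
    then have "((\<lambda>s. deriv (g (circlepath 0 r s)) w) has_integral 1) {0..1}"
      using has_integral_deriv_circlepath_mean[OF that r] by simp
    moreover have "continuous_on {0..1} (\<lambda>s. (\<lambda>p. deriv (g (circlepath 0 r (fst p))) (snd p)) (s, w))"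
      by (rule continuous_on_compose2[OF continuous_on_deriv_circlepath]) (use r that in \<open>auto intro!: continuous_intros\<close>)
    ultimately show ?thesis
      using norm_power2_le_integral_norm_power2[of "\<lambda>s. deriv (g (circlepath 0 r s)) w" 1] by simp
  qed
qed simp

end

lemma mem_motion_graph: "t \<in> ball 0 1 \<Longrightarrow> (t, y) \<in> motion_graph f X \<longleftrightarrow> y \<in> f t ` X"
  by (auto simp: motion_graph_def image_iff)

lemma image_eq_if_motion_graph_eq:
  assumes "motion_graph g X = motion_graph f X" and "t \<in> ball 0 1"
  shows "g t ` X = f t ` X"
proof (rule set_eqI)
  fix y
  show "y \<in> g t ` X \<longleftrightarrow> y \<in> f t ` X"
    using mem_motion_graph[OF assms(2), of y g X] mem_motion_graph[OF assms(2), of y f X] assms(1)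
    by simp
qed

lemma trivial_motion_if_identity:
  assumes "\<And>t z. t \<in> ball 0 1 \<Longrightarrow> z \<in> X \<Longrightarrow> f t z = z"
  shows "trivial_motion f X"
  unfolding trivial_motion_def
proof (intro exI[of _ "\<lambda>t z. z"] conjI)
  show "holomorphic_motion (\<lambda>t z. z) X"
    by (simp add: holomorphic_motion_def)
  have "((\<lambda>(t, z). z) has_derivative (\<lambda>(h, k). 0 * h + 1 * k)) (at p)" for p :: "complex \<times> complex"
    using bounded_linear_imp_has_derivative[OF bounded_linear_snd] by (simp add: case_prod_unfold)
  then show "holomorphic2_on (\<lambda>t z. z) (ball 0 1 \<times> X)"
    unfolding holomorphic2_on_def by blast
  show "motion_graph (\<lambda>t z. z) X = motion_graph f X"
    unfolding motion_graph_def using assms by (intro image_cong) auto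
qed

lemma holomorphic_motion_add_mult_cnj:
  assumes "holomorphic_motion (\<lambda>t z. z + a t * cnj z) X" and "open X" and "X \<noteq> {}"
  shows "a holomorphic_on ball 0 1" and "a 0 = 0"
proof -
  have "X \<noteq> {0}"
    using assms(2) not_open_singleton by metis
  then obtain z where z: "z \<in> X" "z \<noteq> 0"
    using assms(3) by blast
  have "(\<lambda>t. z + a t * cnj z) holomorphic_on ball 0 1"
    using assms(1) z(1) by (simp add: holomorphic_motion_def)
  then have "(\<lambda>t. ((z + a t * cnj z) - z) / cnj z) holomorphic_on ball 0 1"
    using z(2) by (intro holomorphic_on_divide holomorphic_on_diff holomorphic_on_const) auto
  then show "a holomorphic_on ball 0 1"
    using z by simp
  show "a 0 = 0"
    using assms(1) z by (auto simp: holomorphic_motion_def)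
qed

lemma has_integral_norm_deriv_power2_add_mult_cnj:
  assumes "holomorphic_family g X" and "holomorphic_motion g X" and "bounded X"
    and graph: "motion_graph g X = motion_graph (\<lambda>t z. z + a t * cnj z) X"
    and t: "t \<in> ball 0 1" and a: "cmod (a t) < 1"
  shows "((\<lambda>w. (cmod (deriv (g t) w))\<^sup>2) has_integral (1 - (cmod (a t))\<^sup>2) * measure lborel X) X"
proof -
  interpret holomorphic_family g X by fact
  have image: "g t ` X = (\<lambda>z. z + a t * cnj z) ` X"
    using image_eq_if_motion_graph_eq[OF graph t] by simp
  have "inj_on (g t) X"
    using assms(2) t by (simp add: holomorphic_motion_def)
  moreover have "bounded (g t ` X)"
    unfolding image using assms(3) by (rule bounded_linear_image[OF _ bounded_linear_add_mult_cnj])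
  ultimately have "((\<lambda>w. (cmod (deriv (g t) w))\<^sup>2) has_integral measure lborel (g t ` X)) X"
    by (rule has_integral_norm_deriv_power2[OF holomorphic_on_fibre[OF t] open_X])
  then show ?thesis
    using measure_add_mult_cnj_image[OF a open_X assms(3)] by (simp add: image)
qed

lemma add_mult_cnj_coeff_circlepath_eq_0:
  assumes family: "holomorphic_family g X" and g: "holomorphic_motion g X"
    and X: "bounded X" "X \<noteq> {}"
    and graph: "motion_graph g X = motion_graph (\<lambda>t z. z + a t * cnj z) X"
    and a: "continuous_on (ball 0 1) a" and r: "0 < r" "r < 1"
    and small: "\<And>s. cmod (a (circlepath 0 r s)) < 1"
    and s: "s \<in> {0..1}"
  shows "a (circlepath 0 r s) = 0"
proof -
  interpret holomorphic_family g X by fact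
  define M where "M = measure lborel X"
  have on_circle: "circlepath 0 r s \<in> ball 0 1" for s
    using dist_circlepath[of r 0 s] r by simp
  have cont: "continuous_on {0..1} (\<lambda>s. (cmod (a (circlepath 0 r s)))\<^sup>2)"
    using on_circle by (intro continuous_intros continuous_on_compose2[OF a continuous_on_circlepath]) auto
  define A where "A = integral {0..1} (\<lambda>s. (cmod (a (circlepath 0 r s)))\<^sup>2)"
  have "((\<lambda>s. (cmod (a (circlepath 0 r s)))\<^sup>2) has_integral A) {0..1}"
    unfolding A_def using cont by (intro integrable_integral integrable_continuous_interval)
  then have mean: "((\<lambda>s. M - M * (cmod (a (circlepath 0 r s)))\<^sup>2) has_integral M - M * A) {0..1}"
    using has_integral_const_real[of M 0 1] by (intro has_integral_diff has_integral_mult_right) auto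
  have fibre: "((\<lambda>w. (cmod (deriv (g (circlepath 0 r s)) w))\<^sup>2) has_integral
      M - M * (cmod (a (circlepath 0 r s)))\<^sup>2) X" for s
    using has_integral_norm_deriv_power2_add_mult_cnj[OF family g X(1) graph on_circle small]
    by (simp add: M_def algebra_simps)
  have "\<And>z. z \<in> X \<Longrightarrow> g 0 z = z"
    using g by (simp add: holomorphic_motion_def)
  from measure_le_circle_mean[OF this r fibre mean] have "A \<le> 0"
    using measure_lborel_pos[OF open_X X] by (simp add: M_def mult_le_0_iff)
  then show ?thesis
    using continuous_nonneg_integral_le_0_imp_0[OF cont _ _ s] by (simp add: A_def)
qed

lemma trivial_add_mult_cnj_motion_imp_zero:
  assumes X: "open X" "bounded X" "X \<noteq> {}"
    and motion: "holomorphic_motion (\<lambda>t z. z + a t * cnj z) X"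
    and trivial: "trivial_motion (\<lambda>t z. z + a t * cnj z) X"
    and t: "t \<in> ball 0 1"
  shows "a t = 0"
proof -
  note a = holomorphic_motion_add_mult_cnj[OF motion X(1,3)]
  obtain g where g: "holomorphic_motion g X" "holomorphic2_on g (ball 0 1 \<times> X)"
    and graph: "motion_graph g X = motion_graph (\<lambda>t z. z + a t * cnj z) X"
    using trivial unfolding trivial_motion_def by blast
  have family: "holomorphic_family g X"
    using X(1) g(2) by unfold_locales
  have "isCont a 0"
    using a(1) by (metis centre_in_ball continuous_on_eq_continuous_at holomorphic_on_imp_continuous_on
        open_ball zero_less_one)
  then obtain d where d: "0 < d" "\<And>t. dist t 0 < d \<Longrightarrow> dist (a t) (a 0) < 1"
    unfolding continuous_at_eps_delta by (meson zero_less_one)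
  define r0 where "r0 = min d 1"
  have r0: "0 < r0" "r0 \<le> 1" and small: "\<And>t. cmod t < r0 \<Longrightarrow> cmod (a t) < 1"
    using d a(2) by (auto simp: r0_def dist_norm)
  have near_0: "a t = 0" if "t \<in> ball 0 r0" for t
  proof (cases "t = 0")
    case False
    then have "t \<in> path_image (circlepath 0 (cmod t))"
      by simp
    then obtain s where s: "s \<in> {0..1}" "t = circlepath 0 (cmod t) s"
      unfolding path_image_def by auto
    have "cmod (a (circlepath 0 (cmod t) s')) < 1" for s'
      using that dist_circlepath[of "cmod t" 0 s'] by (intro small) (simp add: dist_norm)
    then have "a (circlepath 0 (cmod t) s) = 0"
      using False that r0 s(1)
      by (intro add_mult_cnj_coeff_circlepath_eq_0[OF family g(1) X(2,3) graph
          holomorphic_on_imp_continuous_on[OF a(1)]]) auto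
    then show ?thesis
      using s(2) by simp
  qed (simp add: a(2))
  show ?thesis
  proof (rule analytic_continuation_open[of "ball 0 r0" "ball 0 1" a "\<lambda>_. 0"])
    show "ball 0 r0 \<subseteq> ball (0::complex) 1"
      using r0(2) by (rule subset_ball)
  qed (use r0 t a(1) near_0 in auto)
qed

theorem corollary1p9:
  fixes X :: "complex set" and a :: "complex \<Rightarrow> complex"
  assumes "smoothly_bounded_domain X"
    and "holomorphic_motion (\<lambda>t z. z + a t * cnj z) X"
  shows "trivial_motion (\<lambda>t z. z + a t * cnj z) X \<longleftrightarrow> (\<forall>t\<in>ball 0 1. a t = 0)"
proof
  have X: "open X" "bounded X" "X \<noteq> {}"
    using assms(1) by (auto simp: smoothly_bounded_domain_def)
  assume "trivial_motion (\<lambda>t z. z + a t * cnj z) X"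
  then show "\<forall>t\<in>ball 0 1. a t = 0"
    using trivial_add_mult_cnj_motion_imp_zero[OF X assms(2)] by blast
next
  assume "\<forall>t\<in>ball 0 1. a t = 0"
  then show "trivial_motion (\<lambda>t z. z + a t * cnj z) X"
    by (intro trivial_motion_if_identity) simp
qed

end
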